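(* For every $L \in \mathbb{N}_0$, every labeled graph $(G,\ell_G)$ and all vertices $u,v \in V(G)$, the following are equivalent: (1) $u$ and $v$ receive the same color after $L$ iterations of the $1$-MWL, i.e. $C^{1,\mathrm{m}}_L(u) = C^{1,\mathrm{m}}_L(v)$; (2) the mean unrolling trees $\mathsf{m\text{-}unr}(G,u,L)$ and $\mathsf{m\text{-}unr}(G,v,L)$ are isomorphic (as labeled rooted trees).
   Context: A labeled graph $(G,\ell_G)$ is a finite undirected graph $G$ with a label function $\ell_G\colon V(G)\to\Sigma$, $\Sigma$ a countable set; $N(v)$ denotes the neighborhood of $v$. For a finite multiset $X$, $\mathsf{set}(X)$ is the set of its distinct elements, $\mathsf{mul}_X(x)$ the multiplicity of $x$, and $\mathsf{freq}(X) = \{(x, \mathsf{mul}_X(x)/|X|) : x \in \mathsf{set}(X)\}$. The $1$-MWL (mean $1$-dimensional Weisfeiler--Leman algorithm) computes colorings $C^{1,\mathrm{m}}_t\colon V(G)\to\mathbb{N}$: $C^{1,\mathrm{m}}_0 = \ell_G$ (via a fixed injection $\Sigma\to\mathbb{N}$), and for $t>0$, $C^{1,\mathrm{m}}_t(v) = \mathsf{RELABEL}\bigl(C^{1,\mathrm{m}}_{t-1}(v), \mathsf{freq}(M_{t-1}(v))\bigr)$, where $M_{t-1}(v) = \{\!\!\{ C^{1,\mathrm{m}}_{t-1}(w) : w \in N(v)\}\!\!\}$ and $\mathsf{RELABEL}$ injectively maps each pair to a natural number not used in previous iterations. The unrolling tree $\mathsf{unr}(G,u,L)$ is the labeled rooted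 tree defined inductively: for $L=0$ it is a single vertex labeled $\ell_G(u)$; for $L>0$ it has a root labeled $\ell_G(u)$ under which, for each $w\in N(u)$, a copy of $\mathsf{unr}(G,w,L-1)$ is attached. Edges are regarded as directed away from the root; the root is at level $0$. Isomorphism of labeled rooted trees means a root-preserving, edge-preserving, label-preserving bijection. Mean pruning: starting from $T=\mathsf{unr}(G,u,L)$, for $l = L-1, L-2, \dots, 0$ in this order, for every vertex $x$ at level $l$ of the current tree, consider the multiset $\mathsf{des}_T(x)$ of isomorphism types of the subtrees rooted at the children of $x$; let $c$ be the greatest common divisor of the multiplicities $\{\mathsf{mul}_{\mathsf{des}_T(x)}(a) : a \in \mathsf{set}(\mathsf{des}_T(x))\}$; for each type $a$, delete $\frac{c-1}{c}\mathsf{mul}_{\mathsf{des}_T(x)}(a)$ of the child subtrees of $x$ of type $a$ (so $\mathsf{mul}(a)/c$ copies remain), updating $T$. The resulting tree is the mean unrolling tree $\mathsf{m\text{-}unr}(G,u,L)$. *)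

theory Defs
  imports Complex_Main "HOL-Library.Multiset"
begin

definition graph :: "'v set \<Rightarrow> ('v \<Rightarrow> 'v \<Rightarrow> bool) \<Rightarrow> bool" where
  "graph V E \<longleftrightarrow> finite V \<and> (\<forall>x y. E x y \<longrightarrow> x \<in> V \<and> y \<in> V)
     \<and> (\<forall>x y. E x y \<longrightarrow> E y x) \<and> (\<forall>x. \<not> E x x)"

definition nbhd :: "'v set \<Rightarrow> ('v \<Rightarrow> 'v \<Rightarrow> bool) \<Rightarrow> 'v \<Rightarrow> 'v set" where
  "nbhd V E v = {w \<in> V. E v w}"

definition freq :: "'a multiset \<Rightarrow> ('a \<times> rat) set" where
  "freq X = (\<lambda>x. (x, of_nat (count X x) / of_nat (size X))) ` set_mset X"

text \<open>The colouring C_t, parametrised by the injection enc of labels into nat and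
  the relabelling function (relabel t is RELABEL used in iteration t+1).\<close>
fun mwl_color :: "('l \<Rightarrow> nat) \<Rightarrow> (nat \<Rightarrow> nat \<times> (nat \<times> rat) set \<Rightarrow> nat)
    \<Rightarrow> 'v set \<Rightarrow> ('v \<Rightarrow> 'v \<Rightarrow> bool) \<Rightarrow> ('v \<Rightarrow> 'l) \<Rightarrow> nat \<Rightarrow> 'v \<Rightarrow> nat" where
  "mwl_color enc relabel V E lab 0 v = enc (lab v)"
| "mwl_color enc relabel V E lab (Suc t) v =
     relabel t (mwl_color enc relabel V E lab t v,
                freq (image_mset (mwl_color enc relabel V E lab t) (mset_set (nbhd V E v))))"

text \<open>Admissible RELABEL: injective (on its actual domain: pairs whose second
  component is finite) and always producing a number not used in previous iterations
  (neither as an initial colour nor by an earlier iteration).\<close>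
definition admissible_relabel :: "('l \<Rightarrow> nat) \<Rightarrow> (nat \<Rightarrow> nat \<times> (nat \<times> rat) set \<Rightarrow> nat) \<Rightarrow> bool" where
  "admissible_relabel enc relabel \<longleftrightarrow>
     inj enc
   \<and> (\<forall>t. inj_on (relabel t) {x. finite (snd x)})
   \<and> (\<forall>t x l. finite (snd x) \<longrightarrow> relabel t x \<noteq> enc l)
   \<and> (\<forall>t t' x y. t' < t \<longrightarrow> finite (snd x) \<longrightarrow> finite (snd y) \<longrightarrow> relabel t x \<noteq> relabel t' y)"

text \<open>Concrete rooted labeled trees (children stored in a list; the order is irrelevant
  for isomorphism). Vertices are addressed by positions (paths of child indices);
  the root is the empty position; edges go from p to p @ [i].\<close>
datatype 'l ltree = Node (root_label: 'l) (children: "'l ltree list")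

fun subtree_at :: "'l ltree \<Rightarrow> nat list \<Rightarrow> 'l ltree option" where
  "subtree_at t [] = Some t"
| "subtree_at (Node a cs) (i # p) = (if i < length cs then subtree_at (cs ! i) p else None)"

definition positions :: "'l ltree \<Rightarrow> nat list set" where
  "positions t = {p. subtree_at t p \<noteq> None}"

definition label_at :: "'l ltree \<Rightarrow> nat list \<Rightarrow> 'l" where
  "label_at t p = root_label (the (subtree_at t p))"

definition tree_edge :: "nat list \<Rightarrow> nat list \<Rightarrow> bool" where
  "tree_edge p q \<longleftrightarrow> (\<exists>i. q = p @ [i])"

definition tree_iso :: "'l ltree \<Rightarrow> 'l ltree \<Rightarrow> bool" where
  "tree_iso s t \<longleftrightarrow> (\<exists>f. bij_betw f (positions s) (positions t) \<and> f [] = []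
     \<and> (\<forall>p\<in>positions s. \<forall>q\<in>positions s. tree_edge p q \<longleftrightarrow> tree_edge (f p) (f q))
     \<and> (\<forall>p\<in>positions s. label_at s p = label_at t (f p)))"

definition enum_set :: "'a set \<Rightarrow> 'a list" where
  "enum_set A = (SOME xs. distinct xs \<and> set xs = A)"

fun unr :: "'v set \<Rightarrow> ('v \<Rightarrow> 'v \<Rightarrow> bool) \<Rightarrow> ('v \<Rightarrow> 'l) \<Rightarrow> 'v \<Rightarrow> nat \<Rightarrow> 'l ltree" where
  "unr V E lab u 0 = Node (lab u) []"
| "unr V E lab u (Suc L) = Node (lab u) (map (\<lambda>w. unr V E lab w L) (enum_set (nbhd V E u)))"

definition mult_iso :: "'l ltree list \<Rightarrow> 'l ltree \<Rightarrow> nat" where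
  "mult_iso cs x = length (filter (tree_iso x) cs)"

text \<open>One pruning step at a vertex with (already pruned) children cs: with c the gcd of
  the multiplicities of the isomorphism types, keep exactly mul(a)/c children of each
  type a (namely the first ones), deleting the others.\<close>
definition prune_children :: "'l ltree list \<Rightarrow> 'l ltree list" where
  "prune_children cs =
     (let c = Gcd (mult_iso cs ` set cs)
      in map fst (filter (\<lambda>(x, i). length (filter (tree_iso x) (take i cs)) < mult_iso cs x div c)
                    (zip cs [0..<length cs])))"

text \<open>Processing the levels L-1, ..., 0 in order is the same as pruning bottom-up:
  a vertex is processed after all its descendants, and processing a vertex only
  changes its own set of children.\<close>
fun mean_prune :: "'l ltree \<Rightarrow> 'l ltree" where
  "mean_prune (Node a cs) = Node a (prune_children (map mean_prune cs))"

definition m_unr :: "'v set \<Rightarrow> ('v \<Rightarrow> 'v \<Rightarrow> bool) \<Rightarrow> ('v \<Rightarrow> 'l) \<Rightarrow> 'v \<Rightarrow> nat \<Rightarrow> 'l ltree" where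
  "m_unr V E lab u L = mean_prune (unr V E lab u L)"

end

(* Mapping a rooted tree to the multiset of the images of its subtrees (mtree_of) identifies
   exactly the isomorphic trees. Mean pruning divides all multiplicities of the children's
   types by their gcd, and two multisets have equal reductions iff they are positive multiples
   of each other, i.e. iff they have the same relative frequencies. So, by induction on L, the
   pruned trees of u and v at depth L+1 agree iff the labels agree and the neighbours' pruned
   depth-L trees, equivalently their colours C_L, have the same frequencies. This is exactly
   equality of C_(L+1): C_L factors through C_(L+1) because RELABEL is injective, so the
   frequencies of C_L on the neighbours determine those of all earlier colourings, and with
   the label they determine C_L itself. *)

theory Submission
  imports Defs "HOL-Combinatorics.List_Permutation"
begin

datatype 'l mtree = MNode 'l "'l mtree multiset"

fun mtree_of :: "'l ltree \<Rightarrow> 'l mtree" where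
  "mtree_of (Node a cs) = MNode a (mset (map mtree_of cs))"

lemma positions_Nil [simp]: "[] \<in> positions t"
  by (simp add: positions_def)

lemma positions_Node_Cons [simp]:
  "i # p \<in> positions (Node a cs) \<longleftrightarrow> i < length cs \<and> p \<in> positions (cs ! i)"
  by (simp add: positions_def)

lemma positions_Node:
  "positions (Node a cs) = insert [] (\<Union>i<length cs. (#) i ` positions (cs ! i))"
proof (rule set_eqI)
  fix p
  show "p \<in> positions (Node a cs) \<longleftrightarrow> p \<in> insert [] (\<Union>i<length cs. (#) i ` positions (cs ! i))"
    by (cases p) auto
qed

lemma positions_append: "p @ q \<in> positions t \<Longrightarrow> p \<in> positions t"
proof (induction p arbitrary: t)
  case (Cons i p)
  then show ?case by (cases t) auto
qed simp

lemma label_at_Node_Nil [simp]: "label_at (Node a cs) [] = a"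
  by (simp add: label_at_def)

lemma label_at_Node_Cons [simp]: "i < length cs \<Longrightarrow> label_at (Node a cs) (i # p) = label_at (cs ! i) p"
  by (simp add: label_at_def)

lemma not_tree_edge_Nil [simp]: "\<not> tree_edge p []"
  by (simp add: tree_edge_def)

lemma tree_edge_Nil_iff: "tree_edge [] q \<longleftrightarrow> length q = 1"
  by (auto simp add: tree_edge_def length_Suc_conv)

lemma tree_edge_Cons_Cons [simp]: "tree_edge (i # p) (j # q) \<longleftrightarrow> i = j \<and> tree_edge p q"
  by (auto simp add: tree_edge_def)

lemma tree_edge_snoc: "tree_edge p (p @ [j])"
  by (auto simp add: tree_edge_def)

definition tree_isomorphism :: "'l ltree \<Rightarrow> 'l ltree \<Rightarrow> (nat list \<Rightarrow> nat list) \<Rightarrow> bool" where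
  "tree_isomorphism s t f \<longleftrightarrow> bij_betw f (positions s) (positions t) \<and> f [] = []
     \<and> (\<forall>p\<in>positions s. \<forall>q\<in>positions s. tree_edge p q \<longleftrightarrow> tree_edge (f p) (f q))
     \<and> (\<forall>p\<in>positions s. label_at s p = label_at t (f p))"

lemma tree_iso_iff_tree_isomorphism: "tree_iso s t \<longleftrightarrow> (\<exists>f. tree_isomorphism s t f)"
  by (simp add: tree_iso_def tree_isomorphism_def)

lemma tree_isomorphism_take:
  assumes f: "tree_isomorphism s t f" and "p \<in> positions s"
  shows "length (f p) = length p \<and> f (take k p) = take k (f p)"
  using \<open>p \<in> positions s\<close>
proof (induction p arbitrary: k rule: rev_induct)
  case Nil
  then show ?case using f by (simp add: tree_isomorphism_def)
next
  case (snoc j p)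
  have p: "p \<in> positions s" using snoc.prems positions_append by blast
  have "tree_edge (f p) (f (p @ [j]))"
    using f p snoc.prems tree_edge_snoc unfolding tree_isomorphism_def by blast
  then obtain j' where fj: "f (p @ [j]) = f p @ [j']" by (auto simp: tree_edge_def)
  show ?case
    using snoc.IH[OF p, of k] snoc.IH[OF p, of "length p"] fj by (cases "k \<le> length p") auto
qed

(* An isomorphism preserves depth and prefixes, so it maps the subtree below child i onto the
   subtree below child hd (f [i]). *)
context
  fixes a b :: 'l and cs ds :: "'l ltree list" and f :: "nat list \<Rightarrow> nat list"
  assumes iso: "tree_isomorphism (Node a cs) (Node b ds) f"
begin

lemma tree_isomorphism_Node_root: "a = b"
proof -
  have "label_at (Node a cs) [] = label_at (Node b ds) (f [])"
    using iso positions_Nil[of "Node a cs"] unfolding tree_isomorphism_def by blast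
  then show ?thesis using iso by (simp add: tree_isomorphism_def)
qed

lemma tree_isomorphism_Node_Cons:
  assumes "i < length cs" "p \<in> positions (cs ! i)"
  shows "f [i] = [hd (f [i])]" and "f (i # p) = hd (f [i]) # tl (f (i # p))"
proof -
  have "i # p \<in> positions (Node a cs)" using assms by simp
  from tree_isomorphism_take[OF iso this, of 1]
  have "f [i] = take 1 (f (i # p))" "f (i # p) \<noteq> []" by auto
  then show "f [i] = [hd (f [i])]" "f (i # p) = hd (f [i]) # tl (f (i # p))"
    by (auto simp: neq_Nil_conv)
qed

lemma tree_isomorphism_Node_Cons_inj:
  assumes "i < length cs" "p \<in> positions (cs ! i)" "i' < length cs" "p' \<in> positions (cs ! i')"
    and "f (i # p) = f (i' # p')"
  shows "i = i' \<and> p = p'"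
proof -
  have "inj_on f (positions (Node a cs))"
    using iso by (simp add: tree_isomorphism_def bij_betw_def)
  then show ?thesis using assms by (auto dest: inj_onD)
qed

lemma tree_isomorphism_Node_Cons_preimage:
  assumes "j < length ds" "q \<in> positions (ds ! j)"
  obtains i p where "i < length cs" "p \<in> positions (cs ! i)" "f (i # p) = j # q"
proof -
  have "j # q \<in> f ` positions (Node a cs)"
    using iso assms by (simp add: tree_isomorphism_def bij_betw_def)
  then obtain r where r: "r \<in> positions (Node a cs)" "f r = j # q" by auto
  moreover have "r \<noteq> []" using r iso by (auto simp: tree_isomorphism_def)
  ultimately show ?thesis using that by (auto simp: neq_Nil_conv)
qed

lemma tree_isomorphism_Node_children_bij:
  "bij_betw (\<lambda>i. hd (f [i])) {..<length cs} {..<length ds}"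
proof (rule bij_betw_imageI)
  show "inj_on (\<lambda>i. hd (f [i])) {..<length cs}"
    by (rule inj_onI) (metis lessThan_iff positions_Nil tree_isomorphism_Node_Cons(1) tree_isomorphism_Node_Cons_inj)
  have "f [i] \<in> positions (Node b ds)" if "i < length cs" for i
    using iso that by (auto simp: tree_isomorphism_def bij_betw_def)
  then have "hd (f [i]) < length ds" if "i < length cs" for i
    using that tree_isomorphism_Node_Cons(1)[OF that positions_Nil] by (metis positions_Node_Cons)
  moreover have "j \<in> (\<lambda>i. hd (f [i])) ` {..<length cs}" if j: "j < length ds" for j
  proof -
    obtain i p where "i < length cs" "p \<in> positions (cs ! i)" "f (i # p) = [j]"
      using tree_isomorphism_Node_Cons_preimage[OF j positions_Nil] .
    then show ?thesis using tree_isomorphism_Node_Cons(2) by fastforce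
  qed
  ultimately show "(\<lambda>i. hd (f [i])) ` {..<length cs} = {..<length ds}" by auto
qed

lemma tree_isomorphism_Node_subtree:
  assumes i: "i < length cs"
  shows "tree_isomorphism (cs ! i) (ds ! hd (f [i])) (\<lambda>p. tl (f (i # p)))"
proof -
  let ?j = "hd (f [i])" and ?g = "\<lambda>p. tl (f (i # p))"
  have f_Cons: "f (i # p) = ?j # ?g p" if "p \<in> positions (cs ! i)" for p
    using tree_isomorphism_Node_Cons(2)[OF i that] .
  have j: "?j < length ds"
    using tree_isomorphism_Node_children_bij i by (auto simp: bij_betw_def)
  have in_ds: "f (i # p) \<in> positions (Node b ds)" if "p \<in> positions (cs ! i)" for p
    using iso i that by (auto simp: tree_isomorphism_def bij_betw_def)
  have "inj_on ?g (positions (cs ! i))"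
    by (rule inj_onI) (metis f_Cons i tree_isomorphism_Node_Cons_inj)
  moreover have "?g ` positions (cs ! i) = positions (ds ! ?j)"
  proof (intro subset_antisym subsetI)
    fix q assume "q \<in> ?g ` positions (cs ! i)"
    then obtain p where "p \<in> positions (cs ! i)" "q = ?g p" by blast
    then show "q \<in> positions (ds ! ?j)" using in_ds f_Cons by (metis positions_Node_Cons)
  next
    fix q assume "q \<in> positions (ds ! ?j)"
    then obtain i' p where i': "i' < length cs" "p \<in> positions (cs ! i')" "f (i' # p) = ?j # q"
      using tree_isomorphism_Node_Cons_preimage j by blast
    then have "i' = i"
      using tree_isomorphism_Node_children_bij i tree_isomorphism_Node_Cons(2)[OF i'(1,2)]
      by (auto simp: bij_betw_def dest: inj_onD)
    then show "q \<in> ?g ` positions (cs ! i)" using i' by force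
  qed
  moreover have "?g [] = []" using tree_isomorphism_Node_Cons(1)[OF i positions_Nil] by (metis list.sel(3))
  moreover have "tree_edge p q \<longleftrightarrow> tree_edge (?g p) (?g q)"
    if "p \<in> positions (cs ! i)" "q \<in> positions (cs ! i)" for p q
  proof -
    have "i # p \<in> positions (Node a cs)" "i # q \<in> positions (Node a cs)" using i that by simp_all
    then have "tree_edge (i # p) (i # q) \<longleftrightarrow> tree_edge (f (i # p)) (f (i # q))"
      using iso unfolding tree_isomorphism_def by blast
    then show ?thesis using f_Cons[OF that(1)] f_Cons[OF that(2)] by (metis tree_edge_Cons_Cons)
  qed
  moreover have "label_at (cs ! i) p = label_at (ds ! ?j) (?g p)" if "p \<in> positions (cs ! i)" for p
  proof -
    have "i # p \<in> positions (Node a cs)" using i that by simp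
    then have "label_at (Node a cs) (i # p) = label_at (Node b ds) (f (i # p))"
      using iso unfolding tree_isomorphism_def by blast
    then show ?thesis using f_Cons[OF that] i j label_at_Node_Cons by metis
  qed
  ultimately show ?thesis unfolding tree_isomorphism_def bij_betw_def by blast
qed

end

lemma tree_isomorphism_Node:
  assumes \<pi>: "bij_betw \<pi> {..<length cs} {..<length ds}"
    and F: "\<And>i. i < length cs \<Longrightarrow> tree_isomorphism (cs ! i) (ds ! \<pi> i) (F i)"
  shows "tree_isomorphism (Node a cs) (Node a ds) (\<lambda>p. case p of [] \<Rightarrow> [] | i # q \<Rightarrow> \<pi> i # F i q)"
    (is "tree_isomorphism ?s ?t ?g")
proof -
  have F_bij: "bij_betw (F i) (positions (cs ! i)) (positions (ds ! \<pi> i))"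
    and F_root: "F i [] = []"
    and F_edge: "\<forall>p\<in>positions (cs ! i). \<forall>q\<in>positions (cs ! i). tree_edge p q \<longleftrightarrow> tree_edge (F i p) (F i q)"
    and F_label: "\<forall>p\<in>positions (cs ! i). label_at (cs ! i) p = label_at (ds ! \<pi> i) (F i p)"
    if "i < length cs" for i
    using F[OF that] by (simp_all add: tree_isomorphism_def)
  have F_Nil_iff: "F i p = [] \<longleftrightarrow> p = []" if "i < length cs" "p \<in> positions (cs ! i)" for i p
    using tree_isomorphism_take[OF F that(2)] that(1) by (metis length_0_conv)
  have \<pi>_inj: "\<pi> i = \<pi> j \<longleftrightarrow> i = j" if "i < length cs" "j < length cs" for i j
    using \<pi> that by (auto simp: bij_betw_def dest: inj_onD)
  have \<pi>_less: "\<pi> i < length ds" if "i < length cs" for i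
    using \<pi> that by (auto simp: bij_betw_def)
  have "inj_on ?g (positions ?s)"
  proof (rule inj_onI)
    fix p q assume "p \<in> positions ?s" "q \<in> positions ?s" "?g p = ?g q"
    then show "p = q"
      using \<pi>_inj F_bij by (auto simp: neq_Nil_conv bij_betw_def dest: inj_onD split: list.splits)
  qed
  moreover have "?g ` positions ?s = positions ?t"
  proof -
    have "?g ` positions ?s = insert [] (\<Union>i<length cs. (#) (\<pi> i) ` F i ` positions (cs ! i))"
      by (simp add: positions_Node image_UN image_image)
    also have "\<dots> = insert [] (\<Union>i<length cs. (#) (\<pi> i) ` positions (ds ! \<pi> i))"
      using F_bij by (simp add: bij_betw_def)
    also have "\<dots> = positions ?t"
    proof -
      have "{..<length ds} = \<pi> ` {..<length cs}" using \<pi> by (simp add: bij_betw_def)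
      then show ?thesis by (simp add: positions_Node SUP_image comp_def)
    qed
    finally show ?thesis .
  qed
  moreover have "tree_edge p q \<longleftrightarrow> tree_edge (?g p) (?g q)"
    if p: "p \<in> positions ?s" and q: "q \<in> positions ?s" for p q
  proof (cases p)
    case Nil
    then show ?thesis using q by (cases q) (auto simp: tree_edge_Nil_iff F_Nil_iff)
  next
    case p_Cons: (Cons i p')
    show ?thesis
    proof (cases q)
      case Nil
      then show ?thesis using p_Cons by simp
    next
      case (Cons j q')
      then have "i < length cs" "j < length cs" "p' \<in> positions (cs ! i)" "q' \<in> positions (cs ! j)"
        using p q p_Cons by simp_all
      then show ?thesis using p_Cons Cons F_edge[of i] \<pi>_inj by (cases "i = j") auto
    qed
  qed
  moreover have "label_at ?s p = label_at ?t (?g p)" if "p \<in> positions ?s" for p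
    using that F_label \<pi>_less by (cases p) auto
  moreover have "?g [] = []" by simp
  ultimately show ?thesis unfolding tree_isomorphism_def bij_betw_def by blast
qed

lemma tree_iso_Node_iff:
  "tree_iso (Node a cs) (Node b ds) \<longleftrightarrow> a = b \<and>
     (\<exists>\<pi>. bij_betw \<pi> {..<length cs} {..<length ds} \<and> (\<forall>i<length cs. tree_iso (cs ! i) (ds ! \<pi> i)))"
    (is "_ \<longleftrightarrow> a = b \<and> (\<exists>\<pi>. ?match \<pi>)")
proof
  assume "tree_iso (Node a cs) (Node b ds)"
  then obtain f where f: "tree_isomorphism (Node a cs) (Node b ds) f"
    unfolding tree_iso_iff_tree_isomorphism ..
  have "\<forall>i<length cs. tree_iso (cs ! i) (ds ! hd (f [i]))"
    using tree_isomorphism_Node_subtree[OF f] tree_iso_iff_tree_isomorphism by blast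
  then have "?match (\<lambda>i. hd (f [i]))"
    using tree_isomorphism_Node_children_bij[OF f] by blast
  then show "a = b \<and> (\<exists>\<pi>. ?match \<pi>)"
    using tree_isomorphism_Node_root[OF f] by blast
next
  assume "a = b \<and> (\<exists>\<pi>. ?match \<pi>)"
  then obtain \<pi> where "a = b" and \<pi>: "bij_betw \<pi> {..<length cs} {..<length ds}"
    and sub: "\<forall>i<length cs. tree_iso (cs ! i) (ds ! \<pi> i)"
    by auto
  define F where "F i = (SOME g. tree_isomorphism (cs ! i) (ds ! \<pi> i) g)" for i
  have "tree_isomorphism (cs ! i) (ds ! \<pi> i) (F i)" if "i < length cs" for i
  proof -
    have "\<exists>g. tree_isomorphism (cs ! i) (ds ! \<pi> i) g"
      using sub that tree_iso_iff_tree_isomorphism by blast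
    then show ?thesis unfolding F_def by (rule someI_ex)
  qed
  then have "tree_iso (Node a cs) (Node a ds)"
    using tree_isomorphism_Node[OF \<pi>] tree_iso_iff_tree_isomorphism by blast
  then show "tree_iso (Node a cs) (Node b ds)" using \<open>a = b\<close> by simp
qed

lemma mset_map_eq_iff_bij_betw:
  "mset (map f xs) = mset (map f ys) \<longleftrightarrow>
     (\<exists>\<pi>. bij_betw \<pi> {..<length xs} {..<length ys} \<and> (\<forall>i<length xs. f (xs ! i) = f (ys ! \<pi> i)))"
proof
  assume "mset (map f xs) = mset (map f ys)"
  from permutation_Ex_bij[OF this] obtain \<pi> where \<pi>: "bij_betw \<pi> {..<length xs} {..<length ys}"
    and eq: "\<forall>i<length xs. map f xs ! i = map f ys ! \<pi> i"
    by auto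
  have "\<pi> i < length ys" if "i < length xs" for i
    using \<pi> that by (auto simp: bij_betw_def)
  then have "\<forall>i<length xs. f (xs ! i) = f (ys ! \<pi> i)" using eq by simp
  then show "\<exists>\<pi>. bij_betw \<pi> {..<length xs} {..<length ys} \<and> (\<forall>i<length xs. f (xs ! i) = f (ys ! \<pi> i))"
    using \<pi> by auto
next
  assume "\<exists>\<pi>. bij_betw \<pi> {..<length xs} {..<length ys} \<and> (\<forall>i<length xs. f (xs ! i) = f (ys ! \<pi> i))"
  then obtain \<pi> where \<pi>: "bij_betw \<pi> {..<length xs} {..<length ys}"
    and eq: "\<forall>i<length xs. f (xs ! i) = f (ys ! \<pi> i)"
    by auto
  have mset_map_nth: "mset (map f zs) = image_mset (\<lambda>i. f (zs ! i)) (mset_set {..<length zs})" for zs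
  proof -
    have "map f zs = map (\<lambda>i. f (zs ! i)) [0..<length zs]"
      by (rule nth_equalityI) simp_all
    then show ?thesis by (simp only: mset_map mset_upt atLeast0LessThan)
  qed
  have "image_mset (\<lambda>i. f (xs ! i)) (mset_set {..<length xs}) =
      image_mset (\<lambda>j. f (ys ! j)) (image_mset \<pi> (mset_set {..<length xs}))"
    unfolding image_mset.compositionality by (rule image_mset_cong) (use eq in auto)
  also have "image_mset \<pi> (mset_set {..<length xs}) = mset_set {..<length ys}"
    using \<pi> by (simp add: image_mset_mset_set bij_betw_def)
  finally show "mset (map f xs) = mset (map f ys)" by (simp only: mset_map_nth)
qed

lemma tree_iso_iff_mtree_of_eq: "tree_iso s t \<longleftrightarrow> mtree_of s = mtree_of t"
proof (induction s arbitrary: t)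
  case (Node a cs)
  obtain b ds where t: "t = Node b ds" by (cases t)
  have children: "(\<forall>i<length cs. tree_iso (cs ! i) (ds ! \<pi> i)) \<longleftrightarrow>
      (\<forall>i<length cs. mtree_of (cs ! i) = mtree_of (ds ! \<pi> i))" for \<pi>
    using Node.IH by simp
  show ?case
    by (simp only: t tree_iso_Node_iff children mtree_of.simps mtree.inject mset_map_eq_iff_bij_betw)
qed

definition mset_gcd :: "'a multiset \<Rightarrow> nat" where
  "mset_gcd M = Gcd (count M ` set_mset M)"

definition mset_reduce :: "'a multiset \<Rightarrow> 'a multiset" where
  "mset_reduce M = Abs_multiset (\<lambda>x. count M x div mset_gcd M)"

lemma mset_gcd_dvd_count: "mset_gcd M dvd count M x"
proof (cases "x \<in># M")
  case True
  then show ?thesis unfolding mset_gcd_def by (intro Gcd_dvd imageI)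
next
  case False
  then show ?thesis by (simp add: not_in_iff)
qed

lemma count_mset_reduce: "count (mset_reduce M) x = count M x div mset_gcd M"
proof -
  have "{x. 0 < count M x div mset_gcd M} \<subseteq> set_mset M"
  proof
    fix x assume "x \<in> {x. 0 < count M x div mset_gcd M}"
    then have "count M x \<noteq> 0" by (metis div_0 less_irrefl mem_Collect_eq)
    then show "x \<in># M" by (simp add: not_in_iff[symmetric])
  qed
  then have "finite {x. 0 < count M x div mset_gcd M}"
    by (rule finite_subset) simp
  then show ?thesis by (simp add: mset_reduce_def)
qed

lemma repeat_mset_gcd_reduce: "repeat_mset (mset_gcd M) (mset_reduce M) = M"
  by (simp add: multiset_eq_iff count_mset_reduce mset_gcd_dvd_count)

lemma mset_reduce_eq_empty_iff: "mset_reduce M = {#} \<longleftrightarrow> M = {#}"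
proof
  assume "mset_reduce M = {#}"
  then show "M = {#}" using repeat_mset_gcd_reduce[of M] by simp
next
  assume "M = {#}"
  then show "mset_reduce M = {#}" by (simp add: multiset_eq_iff count_mset_reduce)
qed

lemma mset_gcd_pos: "M \<noteq> {#} \<Longrightarrow> 0 < mset_gcd M"
  using repeat_mset_gcd_reduce[of M] by (cases "mset_gcd M") auto

lemma set_mset_repeat_mset: "0 < a \<Longrightarrow> set_mset (repeat_mset a M) = set_mset M"
  by (auto simp flip: count_greater_zero_iff)

lemma mset_gcd_repeat_mset: "mset_gcd (repeat_mset a M) = a * mset_gcd M" if "0 < a"
proof -
  have "count (repeat_mset a M) ` set_mset (repeat_mset a M) = (*) a ` count M ` set_mset M"
    using that by (simp add: set_mset_repeat_mset image_image)
  then show ?thesis by (simp add: mset_gcd_def Gcd_mult)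
qed

lemma mset_reduce_repeat_mset: "0 < a \<Longrightarrow> mset_reduce (repeat_mset a M) = mset_reduce M"
  by (simp add: multiset_eq_iff count_mset_reduce mset_gcd_repeat_mset)

definition mset_proportional :: "'a multiset \<Rightarrow> 'a multiset \<Rightarrow> bool" where
  "mset_proportional M N \<longleftrightarrow> (\<exists>a b. 0 < a \<and> 0 < b \<and> repeat_mset a M = repeat_mset b N)"

lemma mset_reduce_eq_iff_proportional:
  "mset_reduce M = mset_reduce N \<longleftrightarrow> mset_proportional M N"
proof
  assume R: "mset_reduce M = mset_reduce N"
  show "mset_proportional M N"
  proof (cases "M = {#}")
    case True
    then have "N = {#}" by (metis R mset_reduce_eq_empty_iff)
    then show ?thesis using True by (auto simp: mset_proportional_def)
  next
    case False
    then have "N \<noteq> {#}" using R by (metis mset_reduce_eq_empty_iff)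
    then have "0 < mset_gcd M" "0 < mset_gcd N"
      using \<open>M \<noteq> {#}\<close> by (simp_all add: mset_gcd_pos)
    moreover have "repeat_mset (mset_gcd N) M = repeat_mset (mset_gcd M) N"
    proof -
      have "repeat_mset (mset_gcd N) M =
          repeat_mset (mset_gcd N) (repeat_mset (mset_gcd M) (mset_reduce M))"
        by (simp only: repeat_mset_gcd_reduce)
      also have "\<dots> = repeat_mset (mset_gcd M) (repeat_mset (mset_gcd N) (mset_reduce N))"
        by (simp add: R mult.commute)
      also have "\<dots> = repeat_mset (mset_gcd M) N"
        by (simp only: repeat_mset_gcd_reduce)
      finally show ?thesis .
    qed
    ultimately show ?thesis unfolding mset_proportional_def by blast
  qed
next
  assume "mset_proportional M N"
  then obtain a b where "0 < a" "0 < b" "repeat_mset a M = repeat_mset b N"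
    by (auto simp: mset_proportional_def)
  then show "mset_reduce M = mset_reduce N" by (metis mset_reduce_repeat_mset)
qed

lemma freq_eq_empty_iff: "freq M = {} \<longleftrightarrow> M = {#}"
  by (simp add: freq_def)

lemma freq_repeat_mset: "0 < a \<Longrightarrow> freq (repeat_mset a M) = freq M"
  by (simp add: freq_def set_mset_repeat_mset)

lemma freq_eq_imp_proportional:
  assumes eq: "freq M = freq N"
  shows "mset_proportional M N"
proof (cases "M = {#}")
  case True
  then have "N = {#}" by (metis eq freq_eq_empty_iff)
  then show ?thesis using True by (auto simp: mset_proportional_def)
next
  case False
  then have "N \<noteq> {#}" using eq by (metis freq_eq_empty_iff)
  have "set_mset M = set_mset N"
    using arg_cong[OF eq, of "image fst"] by (simp add: freq_def image_image)
  have "size N * count M x = size M * count N x" for x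
  proof (cases "x \<in># M")
    case True
    then have "(x, of_nat (count M x) / of_nat (size M)) \<in> freq N"
      using eq unfolding freq_def by blast
    then have "(of_nat (count M x) / of_nat (size M) :: rat) = of_nat (count N x) / of_nat (size N)"
      by (auto simp: freq_def)
    then have "(of_nat (size N * count M x) :: rat) = of_nat (size M * count N x)"
      using \<open>M \<noteq> {#}\<close> \<open>N \<noteq> {#}\<close> by (simp add: field_simps)
    then show ?thesis by (simp only: of_nat_eq_iff)
  next
    case False
    then show ?thesis using \<open>set_mset M = set_mset N\<close> by (metis not_in_iff mult_0_right)
  qed
  then have "repeat_mset (size N) M = repeat_mset (size M) N"
    by (simp add: multiset_eq_iff)
  then show ?thesis
    using \<open>M \<noteq> {#}\<close> \<open>N \<noteq> {#}\<close> by (auto simp: mset_proportional_def nonempty_has_size)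
qed

lemma freq_eq_iff_proportional: "freq M = freq N \<longleftrightarrow> mset_proportional M N"
proof
  assume "mset_proportional M N"
  then obtain a b where "0 < a" "0 < b" "repeat_mset a M = repeat_mset b N"
    by (auto simp: mset_proportional_def)
  then show "freq M = freq N" by (metis freq_repeat_mset)
qed (rule freq_eq_imp_proportional)

lemma mset_reduce_eq_iff_freq_eq: "mset_reduce M = mset_reduce N \<longleftrightarrow> freq M = freq N"
  by (simp add: mset_reduce_eq_iff_proportional freq_eq_iff_proportional)

lemma image_mset_repeat_mset: "image_mset f (repeat_mset a M) = repeat_mset a (image_mset f M)"
  by (induction a) simp_all

lemma freq_image_mset:
  assumes "freq M = freq N"
  shows "freq (image_mset f M) = freq (image_mset f N)"
proof -
  obtain a b where "0 < a" "0 < b" "repeat_mset a M = repeat_mset b N"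
    using assms by (auto simp: freq_eq_iff_proportional mset_proportional_def)
  then have "repeat_mset a (image_mset f M) = repeat_mset b (image_mset f N)"
    by (simp flip: image_mset_repeat_mset)
  then show ?thesis
    using \<open>0 < a\<close> \<open>0 < b\<close> by (auto simp: freq_eq_iff_proportional mset_proportional_def)
qed

lemma freq_image_mset_factor:
  assumes "freq (image_mset g M) = freq (image_mset g N)" and "\<And>x y. g x = g y \<Longrightarrow> f x = f y"
  shows "freq (image_mset f M) = freq (image_mset f N)"
proof -
  have "f x = (f \<circ> inv g) (g x)" for x
    using assms(2)[of x "inv g (g x)"] f_inv_into_f[OF rangeI, of g x] by simp
  then have "f = (f \<circ> inv g) \<circ> g" by (simp add: fun_eq_iff)
  then have "image_mset f K = image_mset (f \<circ> inv g) (image_mset g K)" for K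
    by (metis image_mset.compositionality)
  then show ?thesis using freq_image_mset[OF assms(1)] by simp
qed

(* The selection made by prune_children, abstracted over the type map h and the quotas k. *)
lemma count_keep_first:
  "count (mset (map h (map fst (filter (\<lambda>(x, i). count (mset (map h (take i xs))) (h x) < k (h x))
      (zip xs [0..<length xs]))))) y = min (count (mset (map h xs)) y) (k y)"
proof (induction xs rule: rev_induct)
  case (snoc z xs)
  let ?keep = "\<lambda>ys (x, i). count (mset (map h (take i ys))) (h x) < k (h x)"
  have "filter (?keep (xs @ [z])) (zip xs [0..<length xs]) = filter (?keep xs) (zip xs [0..<length xs])"
    by (rule filter_cong) (auto dest: set_zip_rightD)
  then show ?case using snoc.IH by auto
qed simp

lemma length_filter_tree_iso: "length (filter (tree_iso x) ys) = count (mset (map mtree_of ys)) (mtree_of x)"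
  by (induction ys) (auto simp: tree_iso_iff_mtree_of_eq)

lemma mset_prune_children:
  "image_mset mtree_of (mset (prune_children cs)) = mset_reduce (image_mset mtree_of (mset cs))"
proof -
  define M where "M = mset (map mtree_of cs)"
  have mult: "mult_iso cs x = count M (mtree_of x)" for x
    by (simp add: mult_iso_def length_filter_tree_iso M_def)
  have "mult_iso cs ` set cs = count M ` set_mset M"
    by (auto simp: mult M_def)
  then have gcd: "Gcd (mult_iso cs ` set cs) = mset_gcd M"
    by (simp add: mset_gcd_def)
  have "prune_children cs = map fst (filter (\<lambda>(x, i).
      count (mset (map mtree_of (take i cs))) (mtree_of x) < count (mset_reduce M) (mtree_of x))
      (zip cs [0..<length cs]))"
    unfolding prune_children_def Let_def gcd
    by (intro arg_cong[where f = "map fst"] filter_cong)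
      (auto simp: length_filter_tree_iso mult count_mset_reduce)
  then have "count (mset (map mtree_of (prune_children cs))) y = min (count M y) (count (mset_reduce M) y)"
    for y
    using count_keep_first[where h = mtree_of and xs = cs and k = "count (mset_reduce M)"]
    by (simp add: M_def)
  then show ?thesis
    by (simp add: multiset_eq_iff count_mset_reduce M_def)
qed

context
  fixes enc :: "'l \<Rightarrow> nat" and relabel :: "nat \<Rightarrow> nat \<times> (nat \<times> rat) set \<Rightarrow> nat"
    and V :: "'v set" and E :: "'v \<Rightarrow> 'v \<Rightarrow> bool" and lab :: "'v \<Rightarrow> 'l"
  assumes adm: "admissible_relabel enc relabel"
begin

abbreviation (input) color :: "nat \<Rightarrow> 'v \<Rightarrow> nat" where
  "color \<equiv> mwl_color enc relabel V E lab"

abbreviation neighbour_colors :: "nat \<Rightarrow> 'v \<Rightarrow> nat multiset" where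
  "neighbour_colors t v \<equiv> image_mset (color t) (mset_set (nbhd V E v))"

lemma mwl_color_0_eq_iff: "color 0 x = color 0 y \<longleftrightarrow> lab x = lab y"
  using adm by (simp add: admissible_relabel_def inj_eq)

lemma mwl_color_Suc_eq_iff_pair:
  "color (Suc t) x = color (Suc t) y \<longleftrightarrow>
     color t x = color t y \<and> freq (neighbour_colors t x) = freq (neighbour_colors t y)"
proof -
  have "inj_on (relabel t) {x. finite (snd x)}" using adm by (simp add: admissible_relabel_def)
  moreover have "finite (freq M)" for M :: "nat multiset" by (simp add: freq_def)
  ultimately show ?thesis by (simp add: inj_on_eq_iff)
qed

lemma freq_neighbour_colors_Suc_imp:
  "freq (neighbour_colors (Suc t) x) = freq (neighbour_colors (Suc t) y) \<Longrightarrow>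
     freq (neighbour_colors t x) = freq (neighbour_colors t y)"
  by (rule freq_image_mset_factor) (use mwl_color_Suc_eq_iff_pair in blast)+

lemma mwl_color_Suc_eq_iff:
  "color (Suc t) x = color (Suc t) y \<longleftrightarrow>
     lab x = lab y \<and> freq (neighbour_colors t x) = freq (neighbour_colors t y)"
proof (induction t arbitrary: x y)
  case 0
  then show ?case by (simp only: mwl_color_Suc_eq_iff_pair mwl_color_0_eq_iff)
next
  case (Suc t)
  have "color (Suc (Suc t)) x = color (Suc (Suc t)) y \<longleftrightarrow>
      color (Suc t) x = color (Suc t) y \<and>
      freq (neighbour_colors (Suc t) x) = freq (neighbour_colors (Suc t) y)"
    by (rule mwl_color_Suc_eq_iff_pair)
  also have "\<dots> \<longleftrightarrow> lab x = lab y \<and> freq (neighbour_colors t x) = freq (neighbour_colors t y) \<and>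
      freq (neighbour_colors (Suc t) x) = freq (neighbour_colors (Suc t) y)"
    by (simp only: Suc.IH conj_assoc)
  also have "\<dots> \<longleftrightarrow> lab x = lab y \<and>
      freq (neighbour_colors (Suc t) x) = freq (neighbour_colors (Suc t) y)"
    using freq_neighbour_colors_Suc_imp by blast
  finally show ?case .
qed

end

lemma mset_enum_set:
  assumes "finite A"
  shows "mset (enum_set A) = mset_set A"
proof -
  have "\<exists>xs. distinct xs \<and> set xs = A" using finite_distinct_list[OF assms] by blast
  then have "distinct (enum_set A) \<and> set (enum_set A) = A"
    unfolding enum_set_def by (rule someI_ex)
  then show ?thesis by (metis mset_set_set)
qed

lemma mtree_of_m_unr_Suc:
  assumes "finite (nbhd V E u)"
  shows "mtree_of (m_unr V E lab u (Suc L)) = MNode (lab u)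
    (mset_reduce (image_mset (\<lambda>w. mtree_of (m_unr V E lab w L)) (mset_set (nbhd V E u))))"
  using assms
  by (simp add: m_unr_def mset_prune_children mset_enum_set image_mset.compositionality comp_def)

lemma mtree_of_m_unr_eq_iff:
  assumes "finite V" and adm: "admissible_relabel enc relabel"
  shows "mtree_of (m_unr V E lab u L) = mtree_of (m_unr V E lab v L) \<longleftrightarrow>
    mwl_color enc relabel V E lab L u = mwl_color enc relabel V E lab L v"
proof (induction L arbitrary: u v)
  case 0
  show ?case
    using mwl_color_0_eq_iff[where lab = lab, OF adm] by (simp add: m_unr_def prune_children_def Let_def)
next
  case (Suc L)
  let ?T = "\<lambda>w. mtree_of (m_unr V E lab w L)" and ?C = "mwl_color enc relabel V E lab L"
  let ?N = "\<lambda>w. mset_set (nbhd V E w)"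
  have "finite (nbhd V E w)" for w using \<open>finite V\<close> by (simp add: nbhd_def)
  then have "mtree_of (m_unr V E lab u (Suc L)) = mtree_of (m_unr V E lab v (Suc L)) \<longleftrightarrow>
      lab u = lab v \<and> freq (image_mset ?T (?N u)) = freq (image_mset ?T (?N v))"
    by (simp add: mtree_of_m_unr_Suc mset_reduce_eq_iff_freq_eq)
  also have "freq (image_mset ?T (?N u)) = freq (image_mset ?T (?N v)) \<longleftrightarrow>
      freq (image_mset ?C (?N u)) = freq (image_mset ?C (?N v))"
  proof
    assume "freq (image_mset ?T (?N u)) = freq (image_mset ?T (?N v))"
    then show "freq (image_mset ?C (?N u)) = freq (image_mset ?C (?N v))"
      by (rule freq_image_mset_factor) (simp add: Suc.IH)
  next
    assume "freq (image_mset ?C (?N u)) = freq (image_mset ?C (?N v))"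
    then show "freq (image_mset ?T (?N u)) = freq (image_mset ?T (?N v))"
      by (rule freq_image_mset_factor) (simp add: Suc.IH)
  qed
  finally show ?case by (simp only: mwl_color_Suc_eq_iff[where lab = lab, OF adm])
qed

theorem mainTheorem1:
  fixes V :: "'v set" and E :: "'v \<Rightarrow> 'v \<Rightarrow> bool" and lab :: "'v \<Rightarrow> 'l"
    and enc :: "'l \<Rightarrow> nat" and relabel :: "nat \<Rightarrow> nat \<times> (nat \<times> rat) set \<Rightarrow> nat"
    and L :: nat and u v :: 'v
  assumes "graph V E" and "admissible_relabel enc relabel"
    and "u \<in> V" and "v \<in> V"
  shows "mwl_color enc relabel V E lab L u = mwl_color enc relabel V E lab L v
     \<longleftrightarrow> tree_iso (m_unr V E lab u L) (m_unr V E lab v L)"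
proof -
  have "finite V" using \<open>graph V E\<close> by (simp add: graph_def)
  then show ?thesis
    by (simp add: tree_iso_iff_mtree_of_eq mtree_of_m_unr_eq_iff[OF _ \<open>admissible_relabel enc relabel\<close>])
qed

end
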